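(* For any three continuous functions $f_1,f_2,f_3:\mathrm{SO}(4)\to S^3\times S^3$, there exists a rotation $R\in\mathrm{SO}(4)$ such that $d_4(R,\mathbf{R}_{QQ}(f_i(R)))\ge\pi$ for all $i\in\{1,2,3\}$.
   Context: Identify $\mathbb{R}^4$ with the quaternions via $(w,x,y,z)\leftrightarrow w+x\mathbf{i}+y\mathbf{j}+z\mathbf{k}$; $S^3$ is the set of unit quaternions. For $(\mathbf{q}_L,\mathbf{q}_R)\in S^3\times S^3$, $\mathbf{R}_{QQ}(\mathbf{q}_L,\mathbf{q}_R)\in\mathrm{SO}(4)$ is the rotation $\mathbf{p}\mapsto\mathbf{q}_L\mathbf{p}\mathbf{q}_R$; every element of $\mathrm{SO}(4)$ is of this form, and $(\mathbf{q}_L,\mathbf{q}_R)$ is determined up to replacing it by $(-\mathbf{q}_L,-\mathbf{q}_R)$. For unit quaternions let $d_Q(\mathbf{p},\mathbf{q})=\cos^{-1}(\mathbf{p}\cdot\mathbf{q})$ (Euclidean dot product in $\mathbb{R}^4$). The distance between $R_1=\mathbf{R}_{QQ}(\mathbf{p}_L,\mathbf{p}_R)$ and $R_2=\mathbf{R}_{QQ}(\mathbf{q}_L,\mathbf{q}_R)$ is $d_4(R_1,R_2)=\min\{a+b,2\pi-a-b\}+|a-b|$ where $a=d_Q(\mathbf{p}_L,\mathbf{q}_L)$, $b=d_Q(\mathbf{p}_R,\mathbf{q}_R)$; this is independent of the choice of representatives and equals $|\theta|+|\phi|$ where $e^{\pm i\theta},e^{\pm i\phi}$ are the eigenvalues of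 $R_2R_1^{-1}$ with $\theta\in[0,\pi]$, $|\theta|\ge|\phi|$. *)

theory Defs
  imports "HOL-Analysis.Analysis"
begin

text \<open>R^4 identified with the quaternions: (w,x,y,z) = w + x i + y j + z k,
  stored as components 1,2,3,4 of a vector in real^4.\<close>

definition qmult :: "real^4 \<Rightarrow> real^4 \<Rightarrow> real^4" where
  "qmult p q = vector
     [p$1*q$1 - p$2*q$2 - p$3*q$3 - p$4*q$4,
      p$1*q$2 + p$2*q$1 + p$3*q$4 - p$4*q$3,
      p$1*q$3 - p$2*q$4 + p$3*q$1 + p$4*q$2,
      p$1*q$4 + p$2*q$3 - p$3*q$2 + p$4*q$1]"

definition S3 :: "(real^4) set" where
  "S3 = sphere 0 1"

definition SO4 :: "(real^4^4) set" where
  "SO4 = {A. rotation_matrix A}"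

definition RQQ :: "(real^4) \<times> (real^4) \<Rightarrow> real^4^4" where
  "RQQ q = matrix (\<lambda>p. qmult (qmult (fst q) p) (snd q))"

definition dQ :: "real^4 \<Rightarrow> real^4 \<Rightarrow> real" where
  "dQ p q = arccos (p \<bullet> q)"

definition d4q :: "(real^4) \<times> (real^4) \<Rightarrow> (real^4) \<times> (real^4) \<Rightarrow> real" where
  "d4q p q = (let a = dQ (fst p) (fst q); b = dQ (snd p) (snd q)
              in min (a + b) (2*pi - a - b) + \<bar>a - b\<bar>)"

text \<open>Distance on SO(4), computed from (arbitrarily chosen) representatives;
  by the context it does not depend on the choice.\<close>
definition d4 :: "real^4^4 \<Rightarrow> real^4^4 \<Rightarrow> real" where
  "d4 R1 R2 = d4q (SOME p. p \<in> S3 \<times> S3 \<and> RQQ p = R1)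
                  (SOME q. q \<in> S3 \<times> S3 \<and> RQQ q = R2)"

end

theory Submission
  imports Defs "HOL-Homology.Homology"
begin

text \<open>For \<open>p \<in> S\<^sup>3\<close> put \<open>R = R\<^sub>Q\<^sub>Q(p, p) \<in> SO(4)\<close>. Since \<open>R\<^sub>Q\<^sub>Q(-p, -p) = R\<^sub>Q\<^sub>Q(p, p)\<close>, the map
  \<open>p \<mapsto> (p \<bullet> fst (f\<^sub>i R))\<^sub>i\<close> is an odd continuous map \<open>S\<^sup>3 \<rightarrow> \<real>\<^sup>3\<close>, so by Borsuk--Ulam it vanishes
  at some \<open>p\<close>. If \<open>(a, b)\<close> represents \<open>f\<^sub>i R\<close>, then \<open>(p \<bullet> a) (p \<bullet> b) = 0\<close>: the angles
  \<open>d\<^sub>Q(p, a)\<close> and \<open>d\<^sub>Q(p, b)\<close> lie on different sides of \<open>\<pi>/2\<close>, which forces \<open>d\<^sub>4 \<ge> \<pi>\<close>.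
  The representatives of a rotation are unique up to sign, because the Frobenius inner product of
  \<open>R\<^sub>Q\<^sub>Q(a, b)\<close> and \<open>R\<^sub>Q\<^sub>Q(c, d)\<close> is \<open>4 (a \<bullet> c) (b \<bullet> d)\<close>, and \<open>d\<^sub>4\<close> is invariant under
  these sign changes.

  Borsuk--Ulam for \<open>S\<^sup>3 \<rightarrow> \<real>\<^sup>3\<close> is derived from the parity of degrees of odd maps: a
  nonvanishing odd map can be approximated by an odd polynomial map, the cone over the image of a
  great circle is negligible and hence misses a line, and flattening along that line yields an
  odd map \<open>S\<^sup>3 \<rightarrow> S\<^sup>2\<close> that sends the great circle into a great circle. Such a map would have
  odd degree as a self-map of \<open>S\<^sup>3\<close>, although it is not surjective.\<close>

section \<open>Quaternion multiplication and the rotations \<open>RQQ\<close>\<close>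

lemma vector4_nth [simp]:
  "(vector [a, b, c, d] :: 'a::zero^4) $ 1 = a"
  "(vector [a, b, c, d] :: 'a^4) $ 2 = b"
  "(vector [a, b, c, d] :: 'a^4) $ 3 = c"
  "(vector [a, b, c, d] :: 'a^4) $ 4 = d"
  unfolding vector_def by simp_all

lemma qmult_nth [simp]:
  "qmult p q $ 1 = p$1*q$1 - p$2*q$2 - p$3*q$3 - p$4*q$4"
  "qmult p q $ 2 = p$1*q$2 + p$2*q$1 + p$3*q$4 - p$4*q$3"
  "qmult p q $ 3 = p$1*q$3 - p$2*q$4 + p$3*q$1 + p$4*q$2"
  "qmult p q $ 4 = p$1*q$4 + p$2*q$3 - p$3*q$2 + p$4*q$1"
  by (simp_all add: qmult_def)

lemma inner_vec4: "(x::real^4) \<bullet> y = x$1*y$1 + x$2*y$2 + x$3*y$3 + x$4*y$4"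
  by (simp add: inner_vec_def sum_4)

lemma norm_vec4: "norm (x::real^4) = sqrt (x$1^2 + x$2^2 + x$3^2 + x$4^2)"
  by (simp add: norm_eq_sqrt_inner inner_vec4 power2_eq_square)

lemma norm_qmult: "norm (qmult p q) = norm p * norm q"
proof -
  have "(qmult p q $ 1)^2 + (qmult p q $ 2)^2 + (qmult p q $ 3)^2 + (qmult p q $ 4)^2
      = (p$1^2 + p$2^2 + p$3^2 + p$4^2) * (q$1^2 + q$2^2 + q$3^2 + q$4^2)"
    by (simp add: power2_eq_square algebra_simps)
  then show ?thesis
    by (simp add: norm_vec4 real_sqrt_mult)
qed

lemma linear_qmult_both: "linear (\<lambda>x. qmult (qmult a x) b)"
  by (rule linearI) (simp_all add: vec_eq_iff forall_4 algebra_simps)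

lemma axis4_eq_vector:
  "axis 1 1 = (vector [1, 0, 0, 0] :: real^4)"
  "axis 2 1 = (vector [0, 1, 0, 0] :: real^4)"
  "axis 3 1 = (vector [0, 0, 1, 0] :: real^4)"
  "axis 4 1 = (vector [0, 0, 0, 1] :: real^4)"
  by (simp_all add: vec_eq_iff forall_4 axis_def)

lemma RQQ_nth: "RQQ (a, b) $ i $ j = qmult (qmult a (axis j 1)) b $ i"
  by (simp add: RQQ_def matrix_def)

lemma frobenius_inner_RQQ:
  "(\<Sum>i\<in>UNIV. \<Sum>j\<in>UNIV. RQQ (a, b) $ i $ j * RQQ (c, d) $ i $ j) = 4 * (a \<bullet> c) * (b \<bullet> d)"
  unfolding RQQ_nth sum_4 inner_vec4 axis4_eq_vector by (simp add: algebra_simps)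

lemma RQQ_uminus: "RQQ (-a, -b) = RQQ (a, b)"
proof -
  have "qmult (qmult (-a) x) (-b) = qmult (qmult a x) b" for x
    by (simp add: vec_eq_iff forall_4 algebra_simps)
  then show ?thesis
    unfolding RQQ_def by simp
qed

lemma RQQ_one: "RQQ (axis 1 1, axis 1 1) = mat 1"
  by (simp add: RQQ_nth vec_eq_iff forall_4 mat_def axis4_eq_vector)

lemma RQQ_eq_chi: "RQQ q = (\<chi> i j. qmult (qmult (fst q) (axis j 1)) (snd q) $ i)"
  by (simp add: RQQ_def matrix_def)

lemma continuous_on_RQQ: "continuous_on S RQQ"
proof -
  have "continuous_on S (\<lambda>q. qmult (qmult (fst q) (axis j 1)) (snd q) $ i)" for i j
    using exhaust_4[of i] by (elim disjE) (simp only: qmult_nth; intro continuous_intros)+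
  then show ?thesis
    unfolding RQQ_eq_chi by (intro continuous_on_vec_lambda)
qed

lemma orthogonal_matrix_RQQ:
  assumes "q \<in> S3 \<times> S3"
  shows "orthogonal_matrix (RQQ q)"
proof -
  obtain a b where q: "q = (a, b)" "norm a = 1" "norm b = 1"
    using assms by (cases q) (auto simp: S3_def)
  have "orthogonal_transformation (\<lambda>x. qmult (qmult a x) b)"
    unfolding orthogonal_transformation using linear_qmult_both q by (simp add: norm_qmult)
  then show ?thesis
    unfolding q RQQ_def orthogonal_transformation_matrix by simp
qed

text \<open>The determinant is continuous with values in \<open>{-1, 1}\<close> on the connected set
  \<open>S3 \<times> S3\<close>, and equals \<open>1\<close> at \<open>(1, 1)\<close>.\<close>
lemma RQQ_in_SO4:
  assumes "q \<in> S3 \<times> S3"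
  shows "RQQ q \<in> SO4"
proof -
  let ?e = "axis 1 1 :: real^4"
  have det_pm1: "det (RQQ p) = 1 \<or> det (RQQ p) = -1" if "p \<in> S3 \<times> S3" for p
    using det_orthogonal_matrix[OF orthogonal_matrix_RQQ[OF that]] .
  have "(\<lambda>p. det (RQQ p)) constant_on S3 \<times> S3"
  proof (rule continuous_discrete_range_constant)
    show "connected (S3 \<times> S3)"
      unfolding S3_def by (simp add: connected_Times connected_sphere)
    show "continuous_on (S3 \<times> S3) (\<lambda>p. det (RQQ p))"
      unfolding det_def
      by (intro continuous_on_sum continuous_on_mult continuous_on_const continuous_on_prod
          continuous_on_component[OF continuous_on_component[OF continuous_on_RQQ]])
    show "\<exists>e>0. \<forall>p'. p' \<in> S3 \<times> S3 \<and> det (RQQ p') \<noteq> det (RQQ p) \<longrightarrow> e \<le> norm (det (RQQ p') - det (RQQ p))"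
      if "p \<in> S3 \<times> S3" for p
    proof (intro exI[of _ 2] conjI allI impI)
      fix p' assume "p' \<in> S3 \<times> S3 \<and> det (RQQ p') \<noteq> det (RQQ p)"
      then show "2 \<le> norm (det (RQQ p') - det (RQQ p))"
        using det_pm1[of p'] det_pm1[OF that] by auto
    qed simp
  qed
  moreover have "(?e, ?e) \<in> S3 \<times> S3"
    by (simp add: S3_def)
  ultimately have "det (RQQ q) = det (RQQ (?e, ?e))"
    using assms by (auto simp: constant_on_def)
  then show ?thesis
    using orthogonal_matrix_RQQ[OF assms] by (simp add: SO4_def rotation_matrix_def RQQ_one)
qed

lemma RQQ_eq_iff:
  assumes "p \<in> S3 \<times> S3" "q \<in> S3 \<times> S3"
  shows "RQQ q = RQQ p \<longleftrightarrow> q = p \<or> q = -p"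
proof
  assume eq: "RQQ q = RQQ p"
  obtain a b c d where pq: "p = (a, b)" "q = (c, d)" and unit: "norm a = 1" "norm b = 1" "norm c = 1" "norm d = 1"
    using assms by (cases p, cases q) (auto simp: S3_def)
  have "4 * (c \<bullet> a) * (d \<bullet> b) = 4 * (a \<bullet> a) * (b \<bullet> b)"
    using frobenius_inner_RQQ[of c d a b] frobenius_inner_RQQ[of a b a b] eq pq by simp
  then have prod: "(c \<bullet> a) * (d \<bullet> b) = 1"
    using unit by (simp add: norm_eq_1)
  have "\<bar>c \<bullet> a\<bar> \<le> 1" "\<bar>d \<bullet> b\<bar> \<le> 1"
    using Cauchy_Schwarz_ineq2[of c a] Cauchy_Schwarz_ineq2[of d b] unit by simp_all
  then have "1 \<le> \<bar>c \<bullet> a\<bar>"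
    using mult_left_le[of "\<bar>d \<bullet> b\<bar>" "\<bar>c \<bullet> a\<bar>"] prod by (simp add: abs_mult[symmetric])
  then have "c \<bullet> a = 1 \<or> c \<bullet> a = -1"
    using \<open>\<bar>c \<bullet> a\<bar> \<le> 1\<close> by linarith
  then have "(c \<bullet> a = 1 \<and> d \<bullet> b = 1) \<or> ((-c) \<bullet> a = 1 \<and> (-d) \<bullet> b = 1)"
    using prod by auto
  moreover have "y = x" if "x \<bullet> y = 1" "norm x = 1" "norm y = 1" for x y :: "real^4"
    using that norm_cauchy_schwarz_eq[of x y] by simp
  ultimately consider "c = a" "d = b" | "-c = a" "-d = b"
    using unit by (metis norm_minus_cancel)
  then show "q = p \<or> q = -p"
    using pq by cases auto
next
  show "q = p \<or> q = -p \<Longrightarrow> RQQ q = RQQ p"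
    by (cases p) (auto simp: RQQ_uminus)
qed


section \<open>The distance \<open>d4\<close>\<close>

lemma abs_inner_S3_le_1: "p \<in> S3 \<Longrightarrow> q \<in> S3 \<Longrightarrow> \<bar>p \<bullet> q\<bar> \<le> 1"
  using Cauchy_Schwarz_ineq2[of p q] by (simp add: S3_def)

lemma dQ_uminus:
  assumes "x \<in> S3" "y \<in> S3"
  shows "dQ (-x) y = pi - dQ x y" "dQ x (-y) = pi - dQ x y"
  using abs_inner_S3_le_1[OF assms] by (simp_all add: dQ_def arccos_minus)

lemma d4q_uminus:
  assumes "p \<in> S3 \<times> S3" "q \<in> S3 \<times> S3"
  shows "d4q (-p) q = d4q p q" "d4q p (-q) = d4q p q"
proof -
  obtain a b c d where pq: "p = (a, b)" "q = (c, d)" and S3: "a \<in> S3" "b \<in> S3" "c \<in> S3" "d \<in> S3"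
    using assms by (cases p, cases q) auto
  have reflect: "min ((pi - x) + (pi - y)) (2*pi - (pi - x) - (pi - y)) + \<bar>(pi - x) - (pi - y)\<bar>
      = min (x + y) (2*pi - x - y) + \<bar>x - y\<bar>" for x y :: real
    by (simp add: min_def abs_if)
  show "d4q (-p) q = d4q p q" "d4q p (-q) = d4q p q"
    unfolding pq d4q_def Let_def by (simp_all add: dQ_uminus S3 reflect)
qed

lemma d4_RQQ:
  assumes "p \<in> S3 \<times> S3" "q \<in> S3 \<times> S3"
  shows "d4 (RQQ p) (RQQ q) = d4q p q"
proof -
  have rep: "(SOME p'. p' \<in> S3 \<times> S3 \<and> RQQ p' = RQQ p) \<in> {p, -p}" if "p \<in> S3 \<times> S3" for p
  proof -
    let ?p' = "SOME p'. p' \<in> S3 \<times> S3 \<and> RQQ p' = RQQ p"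
    have "?p' \<in> S3 \<times> S3 \<and> RQQ ?p' = RQQ p"
      by (rule someI[of _ p]) (simp add: that)
    then show ?thesis
      using RQQ_eq_iff[OF that, of ?p'] by simp
  qed
  have "-p \<in> S3 \<times> S3"
    using assms(1) by (auto simp: S3_def)
  then have "d4q p' q' = d4q p q" if "p' \<in> {p, -p}" "q' \<in> {q, -q}" for p' q'
    using that d4q_uminus[OF assms] d4q_uminus(2)[of "-p" q] assms(2) by auto
  then show ?thesis
    unfolding d4_def using rep[OF assms(1)] rep[OF assms(2)] by blast
qed

lemma arccos_le_pi_half_iff: "\<bar>u\<bar> \<le> 1 \<Longrightarrow> arccos u \<le> pi/2 \<longleftrightarrow> 0 \<le> u"
  using arccos_le_mono[of u 0] by simp

lemma pi_half_le_arccos_iff: "\<bar>u\<bar> \<le> 1 \<Longrightarrow> pi/2 \<le> arccos u \<longleftrightarrow> u \<le> 0"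
  using arccos_le_mono[of 0 u] by simp

lemma pi_le_d4_formula:
  fixes a b :: real
  assumes "a \<le> pi/2 \<and> pi/2 \<le> b \<or> b \<le> pi/2 \<and> pi/2 \<le> a"
  shows "pi \<le> min (a + b) (2*pi - a - b) + \<bar>a - b\<bar>"
  using assms by (auto simp: min_def abs_if)

lemma d4q_ge_pi:
  assumes "p \<in> S3 \<times> S3" "q \<in> S3 \<times> S3" "(fst p \<bullet> fst q) * (snd p \<bullet> snd q) \<le> 0"
  shows "pi \<le> d4q p q"
proof -
  define x y where "x = fst p \<bullet> fst q" and "y = snd p \<bullet> snd q"
  have bounds: "\<bar>x\<bar> \<le> 1" "\<bar>y\<bar> \<le> 1"
    using assms abs_inner_S3_le_1 unfolding x_def y_def by auto
  have "0 \<le> x \<and> y \<le> 0 \<or> x \<le> 0 \<and> 0 \<le> y"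
    using assms(3) mult_le_0_iff unfolding x_def y_def by blast
  then have "arccos x \<le> pi/2 \<and> pi/2 \<le> arccos y \<or> arccos y \<le> pi/2 \<and> pi/2 \<le> arccos x"
    unfolding arccos_le_pi_half_iff[OF bounds(1)] arccos_le_pi_half_iff[OF bounds(2)]
      pi_half_le_arccos_iff[OF bounds(1)] pi_half_le_arccos_iff[OF bounds(2)] by blast
  then have "pi \<le> min (arccos x + arccos y) (2*pi - arccos x - arccos y) + \<bar>arccos x - arccos y\<bar>"
    by (rule pi_le_d4_formula)
  then show ?thesis
    by (simp add: d4q_def dQ_def Let_def x_def y_def)
qed

lemma pi_le_d4_RQQ_if_orthogonal:
  assumes "p \<in> S3" "q \<in> S3 \<times> S3" "p \<bullet> fst q = 0"
  shows "pi \<le> d4 (RQQ (p, p)) (RQQ q)"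
  using d4_RQQ[of "(p, p)" q] d4q_ge_pi[of "(p, p)" q] assms by simp


section \<open>Degrees of odd maps of spheres\<close>

lemma topspace_nsphere_eq:
  "topspace (nsphere n) = {x. (\<Sum>i\<le>n. x i ^ 2) = 1 \<and> (\<forall>i>n. x i = 0)}"
  by (simp add: nsphere)

lemma topspace_nsphere_mono:
  assumes "m \<le> n"
  shows "topspace (nsphere m) \<subseteq> topspace (nsphere n)"
proof (rule lift_Suc_mono_le[OF _ assms])
  show "topspace (nsphere k) \<subseteq> topspace (nsphere (Suc k))" for k
    by (metis subtopology_nsphere_equator topspace_subtopology Int_lower1)
qed

lemma continuous_map_nsphere_restrict:
  assumes "continuous_map (nsphere (Suc n)) (nsphere (Suc n)) f"
    and "f \<in> topspace (nsphere n) \<rightarrow> topspace (nsphere n)"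
  shows "continuous_map (nsphere n) (nsphere n) f"
  by (metis assms continuous_map_from_subtopology continuous_map_in_subtopology
      subtopology_nsphere_equator subtopology_restrict topspace_subtopology)

text \<open>After a rotation the map fixes the base point \<open>e\<^sub>0\<close>, hence, being odd, restricts to
  the identity on \<open>nsphere 0 = {e\<^sub>0, -e\<^sub>0}\<close>; the parity of the degree does not change when
  passing to an equator.\<close>
lemma odd_Brouwer_degree2_circle:
  assumes cont: "continuous_map (nsphere 1) (nsphere 1) f"
    and odd: "\<And>x. x \<in> topspace (nsphere 1) \<Longrightarrow> f (\<lambda>i. - x i) = (\<lambda>i. - f x i)"
  shows "odd (Brouwer_degree2 1 f)"
proof -
  define e :: "nat \<Rightarrow> real" where "e = (\<lambda>i. if i = 0 then 1 else 0)"
  have e: "e \<in> topspace (nsphere 1)"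
    unfolding e_def by (rule in_topspace_nsphere)
  define a b where "a = f e 0" and "b = f e 1"
  have "f e \<in> topspace (nsphere 1)"
    using cont e by (auto simp: continuous_map_def)
  then have ab: "a^2 + b^2 = 1" and fe: "\<And>i. 1 < i \<Longrightarrow> f e i = 0"
    by (auto simp: topspace_nsphere_eq a_def b_def)
  define rot :: "(nat \<Rightarrow> real) \<Rightarrow> nat \<Rightarrow> real" where
    "rot = (\<lambda>y i. if i = 0 then a * y 0 + b * y 1 else if i = 1 then a * y 1 - b * y 0 else y i)"
  have rot_sphere: "rot \<in> topspace (nsphere 1) \<rightarrow> topspace (nsphere 1)"
  proof
    fix y assume "y \<in> topspace (nsphere 1)"
    moreover have "(a * y 0 + b * y 1)^2 + (a * y 1 - b * y 0)^2 = (a^2 + b^2) * (y 0 ^ 2 + y 1 ^ 2)"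
      by (simp add: power2_eq_square algebra_simps)
    ultimately show "rot y \<in> topspace (nsphere 1)"
      using ab by (simp add: topspace_nsphere_eq rot_def)
  qed
  have "continuous_map (nsphere 1) (powertop_real UNIV) rot"
    unfolding continuous_map_componentwise_UNIV rot_def
    by (intro allI continuous_intros continuous_map_nsphere_projection)
  then have cont_rot: "continuous_map (nsphere 1) (nsphere 1) rot"
    using rot_sphere by (subst (2) nsphere) (auto simp: continuous_map_in_subtopology topspace_nsphere_eq)
  define h where "h = rot \<circ> f"
  have cont_h: "continuous_map (nsphere 1) (nsphere 1) h"
    unfolding h_def using cont cont_rot by (rule continuous_map_compose)
  have odd_h: "h (\<lambda>i. - x i) = (\<lambda>i. - h x i)" if "x \<in> topspace (nsphere 1)" for x
    using odd[OF that] by (auto simp: h_def rot_def algebra_simps)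
  have "h e = e"
    using ab fe by (auto simp: h_def rot_def e_def a_def b_def power2_eq_square)
  then have h_id: "h x = id x" if "x \<in> topspace (nsphere 0)" for x
  proof -
    have "x 0 ^ 2 = 1" "\<And>i. 0 < i \<Longrightarrow> x i = 0"
      using that by (auto simp: topspace_nsphere_eq)
    then have "x = e \<or> x = (\<lambda>i. - e i)"
      by (auto simp: e_def fun_eq_iff power2_eq_1_iff)
    then show ?thesis
      using odd_h[OF e] \<open>h e = e\<close> by auto
  qed
  have "even (Brouwer_degree2 1 h - Brouwer_degree2 (1 - Suc 0) h)"
    using h_id odd_h by (intro Borsuk_odd_mapping_degree_step[OF cont_h]) auto
  moreover have "Brouwer_degree2 0 h = 1"
    using Brouwer_degree2_eq[of 0 h id] h_id by simp
  moreover have "Brouwer_degree2 1 h = Brouwer_degree2 1 rot * Brouwer_degree2 1 f"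
    unfolding h_def by (rule Brouwer_degree2_compose[OF cont cont_rot])
  ultimately show ?thesis
    by simp
qed

lemma odd_Brouwer_degree2_flag:
  assumes "1 \<le> n"
    and "continuous_map (nsphere n) (nsphere n) f"
    and "\<And>x. x \<in> topspace (nsphere n) \<Longrightarrow> f (\<lambda>i. - x i) = (\<lambda>i. - f x i)"
    and "\<And>k. 1 \<le> k \<Longrightarrow> k < n \<Longrightarrow> f \<in> topspace (nsphere k) \<rightarrow> topspace (nsphere k)"
  shows "odd (Brouwer_degree2 n f)"
  using assms
proof (induction n rule: nat_induct_at_least)
  case base
  then show ?case
    by (intro odd_Brouwer_degree2_circle)
next
  case (Suc n)
  have into: "f \<in> topspace (nsphere n) \<rightarrow> topspace (nsphere n)"
    using Suc.prems(3)[of n] Suc.hyps by simp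
  have "odd (Brouwer_degree2 n f)"
  proof (rule Suc.IH)
    show "continuous_map (nsphere n) (nsphere n) f"
      using Suc.prems(1) into by (rule continuous_map_nsphere_restrict)
    show "f (\<lambda>i. - x i) = (\<lambda>i. - f x i)" if "x \<in> topspace (nsphere n)" for x
      using Suc.prems(2) topspace_nsphere_mono[of n "Suc n"] that by auto
  qed (use Suc.prems(3) in auto)
  moreover have "even (Brouwer_degree2 (Suc n) f - Brouwer_degree2 n f)"
    using Borsuk_odd_mapping_degree_step[OF Suc.prems(1)] Suc.prems(2) into by (simp add: o_def)
  ultimately show ?case
    by simp
qed

lemma no_odd_map_nsphere_into_equator:
  assumes "1 \<le> n"
    and cont: "continuous_map (nsphere (Suc n)) (nsphere n) f"
    and odd: "\<And>x. x \<in> topspace (nsphere (Suc n)) \<Longrightarrow> f (\<lambda>i. - x i) = (\<lambda>i. - f x i)"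
    and flag: "\<And>k. 1 \<le> k \<Longrightarrow> k < n \<Longrightarrow> f \<in> topspace (nsphere k) \<rightarrow> topspace (nsphere k)"
  shows False
proof -
  have into: "f \<in> topspace (nsphere (Suc n)) \<rightarrow> topspace (nsphere n)"
    using cont by (auto simp: continuous_map_def)
  have cont': "continuous_map (nsphere (Suc n)) (nsphere (Suc n)) f"
    using cont by (metis continuous_map_into_fulltopology subtopology_nsphere_equator)
  have "odd (Brouwer_degree2 (Suc n) f)"
  proof (rule odd_Brouwer_degree2_flag[OF _ cont' odd])
    show "f \<in> topspace (nsphere k) \<rightarrow> topspace (nsphere k)" if "1 \<le> k" "k < Suc n" for k
      using flag[OF that(1)] into topspace_nsphere_mono[of k "Suc n"] that
      by (cases "k = n") auto
  qed (use assms(1) in auto)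
  moreover have "y (Suc n) = 0" if "y \<in> f ` topspace (nsphere (Suc n))" for y
    using into that by (auto simp: topspace_nsphere_eq)
  then have "(\<lambda>i. if i = Suc n then 1 else 0) \<in> topspace (nsphere (Suc n)) - f ` topspace (nsphere (Suc n))"
    by (force simp: topspace_nsphere_eq)
  then have "Brouwer_degree2 (Suc n) f = 0"
    by (intro Brouwer_degree2_nonsurjective[OF cont']) auto
  ultimately show False
    by simp
qed


section \<open>Borsuk--Ulam for maps \<open>S\<^sup>3 \<rightarrow> \<real>\<^sup>3\<close>\<close>

lemma norm_vec3: "norm (x::real^3) = sqrt (x$1^2 + x$2^2 + x$3^2)"
  by (simp add: norm_eq_sqrt_inner inner_vec_def sum_3 power2_eq_square)

lemma sum_atMost_3: "(\<Sum>i\<le>(3::nat). f i) = f 0 + f 1 + f 2 + (f 3 :: 'a::comm_monoid_add)"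
  by (simp add: numeral_3_eq_3 numeral_2_eq_2 ac_simps)

lemma sum_atMost_2: "(\<Sum>i\<le>(2::nat). f i) = f 0 + f 1 + (f 2 :: 'a::comm_monoid_add)"
  by (simp add: numeral_2_eq_2 ac_simps)

lemma nsphere_eq_top_of_set: "nsphere n = top_of_set (topspace (nsphere n))"
  by (simp add: nsphere euclidean_product_topology)

definition vec4_of_seq :: "(nat \<Rightarrow> real) \<Rightarrow> real^4" where
  "vec4_of_seq u = vector [u 0, u 1, u 2, u 3]"

definition seq_of_vec3 :: "real^3 \<Rightarrow> nat \<Rightarrow> real" where
  "seq_of_vec3 w = (\<lambda>i. if i = 0 then w$1 else if i = 1 then w$2 else if i = 2 then w$3 else 0)"

lemma vec4_of_seq_in_sphere: "u \<in> topspace (nsphere 3) \<Longrightarrow> vec4_of_seq u \<in> sphere 0 1"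
  by (simp add: topspace_nsphere_eq sum_atMost_3 norm_vec4 vec4_of_seq_def)

lemma seq_of_vec3_in_nsphere: "w \<in> sphere 0 1 \<Longrightarrow> seq_of_vec3 w \<in> topspace (nsphere 2)"
  by (simp add: topspace_nsphere_eq sum_atMost_2 norm_vec3 seq_of_vec3_def)

lemma continuous_on_vec4_of_seq: "continuous_on S vec4_of_seq"
proof -
  have eq: "vec4_of_seq = (\<lambda>u. \<chi> i. u (if i = 1 then 0 else if i = 2 then 1 else if i = 3 then 2 else 3))"
    by (auto simp: fun_eq_iff vec_eq_iff forall_4 vec4_of_seq_def)
  show ?thesis
    unfolding eq by (intro continuous_on_vec_lambda continuous_on_subset[OF continuous_on_product_coordinates]) simp
qed

lemma continuous_on_seq_of_vec3: "continuous_on S seq_of_vec3"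
  unfolding seq_of_vec3_def
proof (intro continuous_on_coordinatewise_then_product)
  show "continuous_on S (\<lambda>w. if i = 0 then w$1 else if i = 1 then w$2 else if i = 2 then w$3 else 0)" for i
    by (cases "i = 0"; cases "i = 1"; cases "i = 2")
      (simp_all add: continuous_on_component[OF continuous_on_id])
qed

text \<open>Coordinates \<open>x$3, x$4\<close> of \<open>real^4\<close> correspond to the coordinates \<open>2, 3\<close> of
  \<open>nsphere 3\<close>, so the circle \<open>x$3 = x$4 = 0\<close> is \<open>nsphere 1\<close>.\<close>
lemma no_odd_map_sphere4_to_sphere3_equator:
  fixes \<Psi> :: "real^4 \<Rightarrow> real^3"
  assumes cont: "continuous_on (sphere 0 1) \<Psi>"
    and into: "\<Psi> \<in> sphere 0 1 \<rightarrow> sphere 0 1"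
    and odd: "\<And>x. x \<in> sphere 0 1 \<Longrightarrow> \<Psi> (-x) = - \<Psi> x"
    and equator: "\<And>x. x \<in> sphere 0 1 \<Longrightarrow> x$3 = 0 \<Longrightarrow> x$4 = 0 \<Longrightarrow> \<Psi> x $ 3 = 0"
  shows False
proof -
  define F where "F = seq_of_vec3 \<circ> \<Psi> \<circ> vec4_of_seq"
  have F_into: "F \<in> topspace (nsphere 3) \<rightarrow> topspace (nsphere 2)"
  proof
    fix u assume "u \<in> topspace (nsphere 3)"
    then have "\<Psi> (vec4_of_seq u) \<in> sphere 0 1"
      using into vec4_of_seq_in_sphere by blast
    then show "F u \<in> topspace (nsphere 2)"
      unfolding F_def o_def by (rule seq_of_vec3_in_nsphere)
  qed
  have "continuous_on (topspace (nsphere 3)) F"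
    unfolding F_def using vec4_of_seq_in_sphere
    by (intro continuous_on_compose continuous_on_vec4_of_seq continuous_on_seq_of_vec3
        continuous_on_subset[OF cont]) auto
  then have "continuous_map (nsphere 3) (nsphere 2) F"
    using F_into by (subst (1 2) nsphere_eq_top_of_set) simp
  moreover have "F (\<lambda>i. - u i) = (\<lambda>i. - F u i)" if "u \<in> topspace (nsphere 3)" for u
  proof -
    have "vec4_of_seq (\<lambda>i. - u i) = - vec4_of_seq u"
      by (simp add: vec_eq_iff forall_4 vec4_of_seq_def)
    then show ?thesis
      using odd[OF vec4_of_seq_in_sphere[OF that]] by (simp add: F_def seq_of_vec3_def fun_eq_iff)
  qed
  moreover have circle: "F \<in> topspace (nsphere 1) \<rightarrow> topspace (nsphere 1)"
  proof
    fix u assume u: "u \<in> topspace (nsphere 1)"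
    then have u3: "u \<in> topspace (nsphere 3)"
      using topspace_nsphere_mono[of 1 3] by auto
    then have "F u \<in> topspace (nsphere 2)"
      using F_into by auto
    moreover have "u 2 = 0" "u 3 = 0"
      using u by (auto simp: topspace_nsphere_eq)
    then have "F u 2 = 0"
      using equator[OF vec4_of_seq_in_sphere[OF u3]] by (simp add: F_def seq_of_vec3_def vec4_of_seq_def)
    ultimately have "F u i = 0" if "1 < i" for i
      using that by (cases "i = 2") (auto simp: topspace_nsphere_eq)
    with \<open>F u \<in> topspace (nsphere 2)\<close> \<open>F u 2 = 0\<close> show "F u \<in> topspace (nsphere 1)"
      by (simp add: topspace_nsphere_eq sum_atMost_2)
  qed
  moreover have "F \<in> topspace (nsphere k) \<rightarrow> topspace (nsphere k)" if "1 \<le> k" "k < 2" for k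
  proof -
    have "k = 1"
      using that by linarith
    then show ?thesis
      using circle by simp
  qed
  ultimately show False
    using no_odd_map_nsphere_into_equator[of 2 F] by (simp add: Suc_numeral)
qed

text \<open>The odd part \<open>(q x - q (-x)) / 2\<close> of a polynomial \<open>q\<close> uniformly close to \<open>g\<close> is
  just as close, and \<open>g\<close> is bounded away from \<open>0\<close> on the compact set \<open>S\<close>.\<close>
lemma odd_polynomial_function_nonvanishing:
  fixes g :: "'a::euclidean_space \<Rightarrow> 'b::euclidean_space"
  assumes "compact S" and sym: "\<And>x. x \<in> S \<Longrightarrow> -x \<in> S" and "continuous_on S g"
    and odd: "\<And>x. x \<in> S \<Longrightarrow> g (-x) = - g x" and nz: "\<And>x. x \<in> S \<Longrightarrow> g x \<noteq> 0"
  obtains P :: "'a \<Rightarrow> 'b" where "polynomial_function P" "\<And>x. P (-x) = - P x" "\<And>x. x \<in> S \<Longrightarrow> P x \<noteq> 0"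
proof -
  obtain m where "0 < m" and m: "\<And>x. x \<in> S \<Longrightarrow> m \<le> norm (g x)"
  proof (cases "S = {}")
    case False
    then obtain x0 where "x0 \<in> S" "\<And>x. x \<in> S \<Longrightarrow> norm (g x0) \<le> norm (g x)"
      using continuous_attains_inf[OF \<open>compact S\<close> _ continuous_on_norm[OF \<open>continuous_on S g\<close>]] by blast
    then show ?thesis
      using nz that[of "norm (g x0)"] by auto
  qed (use that[of 1] in auto)
  obtain q where "polynomial_function q" and q: "\<And>x. x \<in> S \<Longrightarrow> norm (g x - q x) < m"
    using Stone_Weierstrass_polynomial_function[OF \<open>compact S\<close> \<open>continuous_on S g\<close> \<open>0 < m\<close>] by auto
  define P where "P = (\<lambda>x. (1/2) *\<^sub>R (q x - q (-x)))"
  have "polynomial_function (\<lambda>x. q (-x))"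
    using polynomial_function_compose[OF polynomial_function_minus[OF polynomial_function_id]
        \<open>polynomial_function q\<close>] by (simp add: o_def)
  then have poly: "polynomial_function P"
    unfolding P_def using \<open>polynomial_function q\<close>
    by (intro polynomial_function_cmul polynomial_function_diff)
  have odd_P: "P (-x) = - P x" for x
    by (simp add: P_def algebra_simps)
  have nz_P: "P x \<noteq> 0" if "x \<in> S" for x
  proof
    assume "P x = 0"
    have "g x = (1/2) *\<^sub>R ((g x - q x) - (g (-x) - q (-x)))"
      using \<open>P x = 0\<close> odd[OF that] by (simp add: P_def algebra_simps scaleR_2[symmetric])
    then have "norm (g x) = (1/2) * norm ((g x - q x) - (g (-x) - q (-x)))"
      by (metis norm_scaleR real_norm_def abs_divide abs_one abs_numeral)
    also have "\<dots> \<le> (1/2) * (norm (g x - q x) + norm (g (-x) - q (-x)))"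
      by (intro mult_left_mono norm_triangle_ineq4) simp
    also have "\<dots> < m"
      using q[OF that] q[OF sym[OF that]] by simp
    finally show False
      using m[OF that] by simp
  qed
  show ?thesis
    by (rule that[OF poly odd_P nz_P])
qed

text \<open>The cone \<open>(r, t) \<mapsto> r c(t)\<close> is the image of a plane under a differentiable map,
  hence negligible in dimension at least three.\<close>
lemma unit_vector_outside_cone:
  fixes c :: "real \<Rightarrow> 'a::euclidean_space"
  assumes "2 < DIM('a)" and diff: "\<And>t. c differentiable (at t)"
  obtains v where "norm v = 1" "\<And>r t. r *\<^sub>R c t \<noteq> v"
proof -
  define cone where "cone = (\<lambda>z :: real \<times> real. fst z *\<^sub>R c (snd z))"
  have "cone differentiable_on UNIV"
    unfolding cone_def differentiable_on_def
    using differentiable_compose[OF diff bounded_linear_imp_differentiable[OF bounded_linear_snd]]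
      bounded_linear_imp_differentiable[OF bounded_linear_fst]
    by (auto intro!: differentiable_scaleR simp: o_def)
  then have "negligible (range cone)"
    using assms(1) by (intro negligible_differentiable_image_lowdim) auto
  then obtain z where z: "z \<notin> range cone"
    by (metis non_negligible_UNIV UNIV_eq_I)
  moreover have "cone (0, 0) = 0"
    by (simp add: cone_def)
  ultimately have "z \<noteq> 0"
    by (metis rangeI)
  show ?thesis
  proof
    show "norm (z /\<^sub>R norm z) = 1"
      using \<open>z \<noteq> 0\<close> by simp
    show "r *\<^sub>R c t \<noteq> z /\<^sub>R norm z" for r t
    proof
      assume "r *\<^sub>R c t = z /\<^sub>R norm z"
      then have "z = norm z *\<^sub>R (r *\<^sub>R c t)"
        using \<open>z \<noteq> 0\<close> by simp
      then have "z = cone (norm z * r, t)"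
        by (simp add: cone_def)
      then show False
        using z by (metis rangeI)
    qed
  qed
qed

lemma odd_map_flattening_compact_set:
  fixes K :: "(real^3) set"
  assumes "compact K" "K \<noteq> {}" "axis 3 1 \<notin> K" "- axis 3 1 \<notin> K"
  obtains A :: "real^3 \<Rightarrow> real^3" where "continuous_on UNIV A" "\<And>y. A (-y) = - A y"
    "\<And>y. norm y = 1 \<Longrightarrow> A y \<noteq> 0" "\<And>y. y \<in> K \<Longrightarrow> A y $ 3 = 0"
proof
  define d where "d y = infdist y K * infdist (-y) K" for y
  define A where "A y = (\<chi> i. if i = 3 then d y * y $ 3 else y $ i)" for y
  show "continuous_on UNIV A"
    unfolding A_def d_def
  proof (intro continuous_on_vec_lambda)
    show "continuous_on UNIV (\<lambda>y. if i = 3 then infdist y K * infdist (- y) K * y $ 3 else y $ i)" for i :: 3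
      by (cases "i = 3") (simp_all add: continuous_on_component[OF continuous_on_id] continuous_intros)
  qed
  show "A (-y) = - A y" for y
    by (simp add: A_def d_def vec_eq_iff mult.commute)
  show "A y $ 3 = 0" if "y \<in> K" for y
    using that by (simp add: A_def d_def)
  show "A y \<noteq> 0" if "norm y = 1" for y
  proof
    assume "A y = 0"
    then have y12: "y $ 1 = 0" "y $ 2 = 0" and "d y * y $ 3 = 0"
      by (auto simp: A_def vec_eq_iff dest: spec[of _ 1] spec[of _ 2] spec[of _ 3])
    moreover have "(y $ 3)^2 = 1"
      using that y12 by (simp add: norm_vec3) (metis power2_abs power_one)
    ultimately have "d y = 0" and y3: "y $ 3 = 1 \<or> y $ 3 = -1"
      by (auto simp: power2_eq_1_iff)
    then have "y \<in> K \<or> -y \<in> K"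
      using in_closed_iff_infdist_zero[OF compact_imp_closed[OF \<open>compact K\<close>] \<open>K \<noteq> {}\<close>]
      by (auto simp: d_def)
    moreover have "y = axis 3 1 \<or> y = - axis 3 1"
      using y12 y3 by (auto simp: vec_eq_iff forall_3 axis_def)
    ultimately show False
      using assms by auto
  qed
qed

text \<open>Otherwise the normalised map \<open>x \<mapsto> P x / \<bar>P x\<bar>\<close> could be flattened, keeping it odd,
  so as to send the circle \<open>x$3 = x$4 = 0\<close> into the equator of the sphere.\<close>
lemma odd_map_hits_axis_on_circle:
  fixes P :: "real^4 \<Rightarrow> real^3"
  assumes cont: "continuous_on (sphere 0 1) P" and odd: "\<And>x. x \<in> sphere 0 1 \<Longrightarrow> P (-x) = - P x"
    and nz: "\<And>x. x \<in> sphere 0 1 \<Longrightarrow> P x \<noteq> 0"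
  shows "\<exists>x\<in>sphere 0 1. x$3 = 0 \<and> x$4 = 0 \<and> (\<exists>r. r *\<^sub>R P x = axis 3 1)"
proof (rule ccontr)
  assume avoid: "\<not> ?thesis"
  define N :: "real^3 \<Rightarrow> real^3" where "N w = w /\<^sub>R norm w" for w
  define C where "C = sphere 0 1 \<inter> {x::real^4. x$3 = 0 \<and> x$4 = 0}"
  have "C \<subseteq> sphere 0 1"
    by (simp add: C_def)
  have cont_NP: "continuous_on (sphere 0 1) (\<lambda>x. N (P x))"
    unfolding N_def using nz by (intro continuous_intros cont) auto
  have "compact C"
    unfolding C_def by (intro compact_Int_closed compact_sphere closed_Collect_conj closed_Collect_eq
        continuous_on_component continuous_on_id continuous_on_const)
  define K where "K = (\<lambda>x. N (P x)) ` C"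
  have compact_K: "compact K"
    unfolding K_def using \<open>compact C\<close>
    by (rule compact_continuous_image[OF continuous_on_subset[OF cont_NP \<open>C \<subseteq> sphere 0 1\<close>]])
  have K_nonempty: "K \<noteq> {}"
  proof -
    have "axis 1 1 \<in> C"
      using norm_axis_1[of 1] by (simp add: C_def) (simp add: axis_def)
    then show ?thesis
      by (auto simp: K_def)
  qed
  have axis_notin: "s *\<^sub>R axis 3 1 \<notin> K" if "s * s = 1" for s
  proof
    assume "s *\<^sub>R axis 3 1 \<in> K"
    then obtain x where "x \<in> C" and x: "s *\<^sub>R axis 3 1 = N (P x)"
      by (auto simp: K_def)
    have "(s / norm (P x)) *\<^sub>R P x = s *\<^sub>R N (P x)"
      by (simp add: N_def divide_inverse)
    also have "\<dots> = axis 3 1"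
      using x[symmetric] that by simp
    finally show False
      using avoid \<open>x \<in> C\<close> unfolding C_def by blast
  qed
  then have e3_notin: "axis 3 1 \<notin> K" "- axis 3 1 \<notin> K"
    using axis_notin[of 1] axis_notin[of "-1"] by simp_all
  obtain A :: "real^3 \<Rightarrow> real^3" where A: "continuous_on UNIV A" "\<And>y. A (-y) = - A y"
    "\<And>y. norm y = 1 \<Longrightarrow> A y \<noteq> 0" "\<And>y. y \<in> K \<Longrightarrow> A y $ 3 = 0"
    using odd_map_flattening_compact_set[OF compact_K K_nonempty e3_notin] by metis
  have norm_NP: "norm (N (P x)) = 1" if "x \<in> sphere 0 1" for x
    using nz[OF that] by (simp add: N_def)
  show False
  proof (rule no_odd_map_sphere4_to_sphere3_equator[of "\<lambda>x. N (A (N (P x)))"])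
    show "continuous_on (sphere 0 1) (\<lambda>x. N (A (N (P x))))"
      unfolding N_def[of "A _"] using A(3) norm_NP
      by (intro continuous_intros continuous_on_compose2[OF A(1) cont_NP]) auto
    show "(\<lambda>x. N (A (N (P x)))) \<in> sphere 0 1 \<rightarrow> sphere 0 1"
      using A(3) norm_NP by (simp add: N_def)
    show "N (A (N (P (-x)))) = - N (A (N (P x)))" if "x \<in> sphere 0 1" for x
      using odd[OF that] A(2) by (simp add: N_def)
    show "N (A (N (P x))) $ 3 = 0" if "x \<in> sphere 0 1" "x$3 = 0" "x$4 = 0" for x
      using that A(4)[of "N (P x)"] by (simp add: N_def C_def K_def)
  qed
qed

lemma circle_param:
  fixes x :: "real^4"
  assumes "norm x = 1" "x$3 = 0" "x$4 = 0"
  obtains t where "x = cos t *\<^sub>R axis 1 1 + sin t *\<^sub>R axis 2 1"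
proof -
  have "(x$1)^2 + (x$2)^2 = 1"
    using assms by (simp add: norm_vec4)
  then obtain t where "x$1 = cos t" "x$2 = sin t"
    using sincos_total_2pi by metis
  then have "x = cos t *\<^sub>R axis 1 1 + sin t *\<^sub>R axis 2 1"
    using assms by (simp add: vec_eq_iff forall_4 axis4_eq_vector)
  then show thesis
    by (rule that)
qed

lemma odd_map_hits_line_on_circle:
  fixes P :: "real^4 \<Rightarrow> real^3"
  assumes cont: "continuous_on (sphere 0 1) P" and odd: "\<And>x. x \<in> sphere 0 1 \<Longrightarrow> P (-x) = - P x"
    and nz: "\<And>x. x \<in> sphere 0 1 \<Longrightarrow> P x \<noteq> 0" and "norm v = 1"
  shows "\<exists>x\<in>sphere 0 1. x$3 = 0 \<and> x$4 = 0 \<and> (\<exists>r. r *\<^sub>R P x = v)"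
proof -
  obtain Q :: "real^3 \<Rightarrow> real^3" where Q: "orthogonal_transformation Q" "Q v = axis 3 1"
    using orthogonal_transformation_exists[of v "axis 3 1"] \<open>norm v = 1\<close> by auto
  have lin: "linear Q"
    using Q(1) by (rule orthogonal_transformation_linear)
  have "\<exists>x\<in>sphere 0 1. x$3 = 0 \<and> x$4 = 0 \<and> (\<exists>r. r *\<^sub>R Q (P x) = axis 3 1)"
  proof (rule odd_map_hits_axis_on_circle)
    show "continuous_on (sphere 0 1) (\<lambda>x. Q (P x))"
      using linear_continuous_on[OF linear_conv_bounded_linear[THEN iffD1, OF lin]] cont
      by (rule continuous_on_compose2) auto
    show "Q (P (-x)) = - Q (P x)" if "x \<in> sphere 0 1" for x
      using odd[OF that] linear_neg[OF lin] by simp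
    show "Q (P x) \<noteq> 0" if "x \<in> sphere 0 1" for x
      using nz[OF that] orthogonal_transformation_norm[OF Q(1)] by (metis norm_eq_zero)
  qed
  moreover have "r *\<^sub>R P x = v" if "r *\<^sub>R Q (P x) = axis 3 1" for x r
  proof -
    have "Q (r *\<^sub>R P x) = Q v"
      using that Q(2) linear_scale[OF lin] by simp
    then show ?thesis
      using orthogonal_transformation_inj[OF Q(1)] by (auto dest: injD)
  qed
  ultimately show ?thesis
    by blast
qed

theorem Borsuk_Ulam_sphere4:
  fixes g :: "real^4 \<Rightarrow> real^3"
  assumes cont: "continuous_on (sphere 0 1) g" and odd: "\<And>x. x \<in> sphere 0 1 \<Longrightarrow> g (-x) = - g x"
  shows "\<exists>x\<in>sphere 0 1. g x = 0"
proof (rule ccontr)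
  assume "\<not> ?thesis"
  then obtain P :: "real^4 \<Rightarrow> real^3" where poly: "polynomial_function P"
    and odd_P: "\<And>x. P (-x) = - P x" and nz: "\<And>x. x \<in> sphere 0 1 \<Longrightarrow> P x \<noteq> 0"
    using odd_polynomial_function_nonvanishing[OF compact_sphere _ cont odd] by auto
  define \<gamma> :: "real \<Rightarrow> real^4" where "\<gamma> t = cos t *\<^sub>R axis 1 1 + sin t *\<^sub>R axis 2 1" for t
  have "(P \<circ> \<gamma>) differentiable (at t)" for t
  proof (rule differentiable_chain_at)
    show "\<gamma> differentiable (at t)"
      unfolding \<gamma>_def by (intro differentiable_add differentiable_scaleR differentiable_const)
        (auto simp: real_differentiable_def intro: DERIV_cos DERIV_sin)
    show "P differentiable (at (\<gamma> t))"
      by (rule differentiable_at_polynomial_function[OF poly])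
  qed
  then obtain v where "norm v = 1" and v: "\<And>r t. r *\<^sub>R P (\<gamma> t) \<noteq> v"
    using unit_vector_outside_cone[of "P \<circ> \<gamma>"] by auto
  then obtain x r where x: "x \<in> sphere 0 1" "x$3 = 0" "x$4 = 0" and "r *\<^sub>R P x = v"
    using odd_map_hits_line_on_circle[OF continuous_on_polymonial_function[OF poly] odd_P nz \<open>norm v = 1\<close>]
    by blast
  moreover obtain t where "x = \<gamma> t"
    using circle_param[of x] x unfolding \<gamma>_def by (metis mem_sphere_0)
  ultimately show False
    using v by blast
qed

lemma exists_orthogonal_to_even_maps:
  fixes u :: "3 \<Rightarrow> real^4 \<Rightarrow> real^4"
  assumes "\<And>i. continuous_on (sphere 0 1) (u i)" and "\<And>i p. p \<in> sphere 0 1 \<Longrightarrow> u i (-p) = u i p"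
  shows "\<exists>p\<in>sphere 0 1. \<forall>i. p \<bullet> u i p = 0"
proof -
  have "\<exists>p\<in>sphere 0 1. (\<chi> i. p \<bullet> u i p) = 0"
  proof (rule Borsuk_Ulam_sphere4)
    show "continuous_on (sphere 0 1) (\<lambda>p. \<chi> i. p \<bullet> u i p)"
      using assms(1) by (intro continuous_intros)
    show "(\<chi> i. (-p) \<bullet> u i (-p)) = - (\<chi> i. p \<bullet> u i p)" if "p \<in> sphere 0 1" for p
      by (simp add: vec_eq_iff assms(2)[OF that])
  qed
  then show ?thesis
    by (auto simp: vec_eq_iff)
qed

theorem theorem12:
  fixes f1 f2 f3 :: "real^4^4 \<Rightarrow> (real^4) \<times> (real^4)"
  assumes "continuous_on SO4 f1" and "f1 ` SO4 \<subseteq> S3 \<times> S3"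
    and "continuous_on SO4 f2" and "f2 ` SO4 \<subseteq> S3 \<times> S3"
    and "continuous_on SO4 f3" and "f3 ` SO4 \<subseteq> S3 \<times> S3"
  shows "\<exists>R\<in>SO4. d4 R (RQQ (f1 R)) \<ge> pi \<and> d4 R (RQQ (f2 R)) \<ge> pi
                  \<and> d4 R (RQQ (f3 R)) \<ge> pi"
proof -
  define f where "f i = (if i = 1 then f1 else if i = 2 then f2 else f3)" for i :: 3
  have f: "continuous_on SO4 (f i)" "f i ` SO4 \<subseteq> S3 \<times> S3" for i
    using assms by (auto simp: f_def)
  have RQQ_diag: "RQQ (p, p) \<in> SO4" if "p \<in> sphere 0 1" for p
    using that by (intro RQQ_in_SO4) (simp add: S3_def)
  have cont_diag: "continuous_on (sphere 0 1) (\<lambda>p. RQQ (p, p))"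
    by (rule continuous_on_compose2[OF continuous_on_RQQ, of _ "\<lambda>p. (p, p)"]) (auto intro: continuous_intros)
  have "\<exists>p\<in>sphere 0 1. \<forall>i. p \<bullet> fst (f i (RQQ (p, p))) = 0"
  proof (rule exists_orthogonal_to_even_maps)
    have "continuous_on (sphere 0 1) (\<lambda>p. f i (RQQ (p, p)))" for i
      by (rule continuous_on_compose2[OF f(1) cont_diag]) (use RQQ_diag in auto)
    then show "continuous_on (sphere 0 1) (\<lambda>p. fst (f i (RQQ (p, p))))" for i
      by (rule continuous_on_fst)
  qed (simp add: RQQ_uminus)
  then obtain p where p: "p \<in> S3" "RQQ (p, p) \<in> SO4" "\<And>i. p \<bullet> fst (f i (RQQ (p, p))) = 0"
    using RQQ_diag by (auto simp: S3_def)
  have far: "pi \<le> d4 (RQQ (p, p)) (RQQ (f i (RQQ (p, p))))" for i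
    using p f(2) by (intro pi_le_d4_RQQ_if_orthogonal) auto
  show ?thesis
    using p(2) far[of 1] far[of 2] far[of 3] by (auto simp: f_def)
qed

end
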